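(* Let $F$ be a graph and $r\ge 2$ an integer. There is a constant $C=C(F,r)$ such that for every $n$ and every $n$-vertex $r$-uniform hypergraph $\mathcal{H}$ that is $\mathrm{Tr}(F)$-free, the shadow graph of $\mathcal{H}$ contains at most $C\,n^{|V(F)|-1}$ copies of $F$.
   Context: The shadow graph of a hypergraph $\mathcal{H}$ has vertex set $V(\mathcal{H})$, with $uv$ an edge if and only if some hyperedge of $\mathcal{H}$ contains both $u$ and $v$. $\mathrm{Tr}(F)$ denotes the family of $r$-uniform hypergraphs $\mathcal{F}$ for which $V(F)\subseteq V(\mathcal{F})$ and there is a bijection $f$ from the edges of $F$ to the hyperedges of $\mathcal{F}$ with $f(e)\cap V(F)=e$ for every edge $e$ of $F$. An $r$-uniform hypergraph is $\mathrm{Tr}(F)$-free if it contains no subhypergraph isomorphic to a member of $\mathrm{Tr}(F)$. Copies of $F$ are not necessarily induced subgraphs. *)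

theory Defs
  imports Complex_Main
begin

definition is_graph :: "'a set \<Rightarrow> 'a set set \<Rightarrow> bool" where
  "is_graph V E \<longleftrightarrow> finite V \<and> (\<forall>e\<in>E. e \<subseteq> V \<and> card e = 2)"

definition uniform_hypergraph :: "nat \<Rightarrow> 'b set \<Rightarrow> 'b set set \<Rightarrow> bool" where
  "uniform_hypergraph r V H \<longleftrightarrow> finite V \<and> (\<forall>h\<in>H. h \<subseteq> V \<and> card h = r)"

text \<open>Edge set of the shadow graph (vertex set is that of the hypergraph).\<close>
definition shadow_edges :: "'b set set \<Rightarrow> 'b set set" where
  "shadow_edges H = {{u, v} | u v. u \<noteq> v \<and> (\<exists>h\<in>H. u \<in> h \<and> v \<in> h)}"

text \<open>H contains (a subhypergraph isomorphic to) a member of Tr(F): an injective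
  embedding phi of V(F) into V(H) and an injective map f from edges of F to
  hyperedges of H with f(e) \<inter> phi(V(F)) = phi(e).\<close>
definition contains_Tr :: "'a set \<Rightarrow> 'a set set \<Rightarrow> 'b set \<Rightarrow> 'b set set \<Rightarrow> bool" where
  "contains_Tr VF EF V H \<longleftrightarrow>
     (\<exists>\<phi> f. inj_on \<phi> VF \<and> \<phi> ` VF \<subseteq> V \<and> inj_on f EF \<and> f ` EF \<subseteq> H \<and>
        (\<forall>e\<in>EF. f e \<inter> \<phi> ` VF = \<phi> ` e))"

definition Tr_free :: "'a set \<Rightarrow> 'a set set \<Rightarrow> 'b set \<Rightarrow> 'b set set \<Rightarrow> bool" where
  "Tr_free VF EF V H \<longleftrightarrow> \<not> contains_Tr VF EF V H"

text \<open>Copies of F in a graph (V,E): subgraphs (W,D), W \<subseteq> V, D \<subseteq> E, isomorphic to F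
  (not necessarily induced).\<close>
definition copies :: "'a set \<Rightarrow> 'a set set \<Rightarrow> 'b set \<Rightarrow> 'b set set \<Rightarrow> ('b set \<times> 'b set set) set" where
  "copies VF EF V E = {(W, D). W \<subseteq> V \<and> D \<subseteq> E \<and>
      (\<exists>g. bij_betw g VF W \<and> D = (\<lambda>e. g ` e) ` EF)}"

end

theory Submission
  imports Defs "HOL-Library.FuncSet"
begin

text \<open>A copy of \<open>F\<close> in the shadow graph is the image of an injective map
  \<open>g : V(F) \<rightarrow> V(\<H>)\<close> sending every edge \<open>ab\<close> of \<open>F\<close> to a shadow edge, so some fixed
  hyperedge \<open>h\<^sub>a\<^sub>b\<close> contains \<open>g a\<close> and \<open>g b\<close>. If each \<open>h\<^sub>a\<^sub>b\<close> met \<open>g(V(F))\<close> exactly in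
  \<open>{g a, g b}\<close>, these hyperedges would form a member of \<open>Tr(F)\<close>. Hence for a \<open>Tr(F)\<close>-free
  \<open>\<H>\<close> some \<open>h\<^sub>a\<^sub>b\<close> contains a third vertex \<open>g c\<close>, and \<open>g\<close> is determined by its values
  off \<open>c\<close> (at most \<open>n\<^bsup>|V(F)|-1\<^esup>\<close> choices) together with the position of \<open>g c\<close> in the
  \<open>r\<close>-set \<open>h\<^sub>a\<^sub>b\<close>. Summing over the triples \<open>(a, b, c)\<close> gives the bound.\<close>

definition witness_edge :: "'b set set \<Rightarrow> 'b \<Rightarrow> 'b \<Rightarrow> 'b set" where
  "witness_edge H x y =
     (if \<exists>h\<in>H. x \<in> h \<and> y \<in> h then SOME h. h \<in> H \<and> x \<in> h \<and> y \<in> h else {})"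

lemma witness_edge:
  assumes "\<exists>h\<in>H. x \<in> h \<and> y \<in> h"
  shows "witness_edge H x y \<in> H" and "x \<in> witness_edge H x y" and "y \<in> witness_edge H x y"
proof -
  from assms have "\<exists>h. h \<in> H \<and> x \<in> h \<and> y \<in> h" by blast
  from someI_ex[OF this] assms
  show "witness_edge H x y \<in> H" "x \<in> witness_edge H x y" "y \<in> witness_edge H x y"
    unfolding witness_edge_def by simp_all
qed

lemma witness_edge_shadow:
  assumes "{x, y} \<in> shadow_edges H"
  shows "witness_edge H x y \<in> H" and "x \<in> witness_edge H x y" and "y \<in> witness_edge H x y"
proof -
  from assms have "\<exists>h\<in>H. x \<in> h \<and> y \<in> h"
    unfolding shadow_edges_def by (auto simp: doubleton_eq_iff)
  then show "witness_edge H x y \<in> H" "x \<in> witness_edge H x y" "y \<in> witness_edge H x y"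
    by (rule witness_edge)+
qed

lemma card_witness_edge_le:
  assumes "uniform_hypergraph r V H"
  shows "finite (witness_edge H x y) \<and> card (witness_edge H x y) \<le> r"
proof (cases "\<exists>h\<in>H. x \<in> h \<and> y \<in> h")
  case True
  with witness_edge(1) assms show ?thesis
    unfolding uniform_hypergraph_def by (metis finite_subset order_refl)
qed (auto simp: witness_edge_def)

lemma card_PiE_constrained_le:
  fixes S :: "'b \<Rightarrow> 'b \<Rightarrow> 'b set"
  assumes "finite A" and "finite B" and "c \<in> A" and "a \<noteq> c" and "b \<noteq> c"
    and S: "\<And>x y. finite (S x y) \<and> card (S x y) \<le> r"
  shows "card {g \<in> A \<rightarrow>\<^sub>E B. g c \<in> S (g a) (g b)} \<le> r * card B ^ (card A - 1)"
proof -
  define P where "P = (A - {c}) \<rightarrow>\<^sub>E B"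
  define \<Sigma> where "\<Sigma> = (SIGMA g':P. S (g' a) (g' b))"
  have "finite P" unfolding P_def using assms(1,2) by (simp add: finite_PiE)
  then have "finite \<Sigma>" unfolding \<Sigma>_def using S by blast
  have "{g \<in> A \<rightarrow>\<^sub>E B. g c \<in> S (g a) (g b)} \<subseteq> (\<lambda>(g', v). g'(c := v)) ` \<Sigma>"
  proof
    fix g assume g: "g \<in> {g \<in> A \<rightarrow>\<^sub>E B. g c \<in> S (g a) (g b)}"
    let ?g' = "g(c := undefined)"
    have "(?g', g c) \<in> \<Sigma>"
      using g \<open>a \<noteq> c\<close> \<open>b \<noteq> c\<close> unfolding \<Sigma>_def P_def PiE_def extensional_def by auto
    moreover have "g = ?g'(c := g c)" by simp
    ultimately show "g \<in> (\<lambda>(g', v). g'(c := v)) ` \<Sigma>" by force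
  qed
  then have "card {g \<in> A \<rightarrow>\<^sub>E B. g c \<in> S (g a) (g b)} \<le> card \<Sigma>"
    using \<open>finite \<Sigma>\<close> by (meson card_image_le card_mono finite_imageI order_trans)
  also have "\<dots> = (\<Sum>g'\<in>P. card (S (g' a) (g' b)))"
    unfolding \<Sigma>_def using \<open>finite P\<close> S by (simp add: card_SigmaI)
  also have "\<dots> \<le> card P * r"
    using sum_mono[of P "\<lambda>g'. card (S (g' a) (g' b))" "\<lambda>_. r"] S by simp
  also have "card P = card B ^ (card A - 1)"
    unfolding P_def using assms(1,3) by (simp add: card_PiE)
  finally show ?thesis by (simp add: mult.commute)
qed

lemma copies_subset_image_PiE:
  assumes "is_graph VF EF"
  shows "copies VF EF V E \<subseteq>
    (\<lambda>g. (g ` VF, (\<lambda>e. g ` e) ` EF)) ` {g \<in> VF \<rightarrow>\<^sub>E V. inj_on g VF \<and> (\<lambda>e. g ` e) ` EF \<subseteq> E}"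
proof
  fix x assume "x \<in> copies VF EF V E"
  then obtain W D g0 where x: "x = (W, D)" and "W \<subseteq> V" "D \<subseteq> E"
    and bij: "bij_betw g0 VF W" and D: "D = (\<lambda>e. g0 ` e) ` EF"
    unfolding copies_def by blast
  define g where "g = restrict g0 VF"
  have edges_in_VF: "e \<subseteq> VF" if "e \<in> EF" for e
    using assms that unfolding is_graph_def by blast
  have "(\<lambda>e. g ` e) ` EF = D"
    unfolding D g_def using edges_in_VF by (auto intro!: image_cong)
  moreover have "g ` VF = W" "inj_on g VF"
    using bij unfolding g_def bij_betw_def by (auto simp: inj_on_def)
  ultimately show "x \<in> (\<lambda>g. (g ` VF, (\<lambda>e. g ` e) ` EF)) `
      {g \<in> VF \<rightarrow>\<^sub>E V. inj_on g VF \<and> (\<lambda>e. g ` e) ` EF \<subseteq> E}"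
    using x \<open>W \<subseteq> V\<close> \<open>D \<subseteq> E\<close> unfolding g_def by (intro image_eqI[of _ _ g]) (auto simp: g_def)
qed

lemma contains_TrI:
  assumes "is_graph VF EF" and "inj_on \<phi> VF" and "\<phi> ` VF \<subseteq> V"
    and traces: "\<forall>e\<in>EF. \<exists>h\<in>H. h \<inter> \<phi> ` VF = \<phi> ` e"
  shows "contains_Tr VF EF V H"
proof -
  from traces obtain f where f: "\<forall>e\<in>EF. f e \<in> H \<and> f e \<inter> \<phi> ` VF = \<phi> ` e"
    by metis
  have "inj_on f EF"
  proof (rule inj_onI)
    fix e1 e2 assume "e1 \<in> EF" "e2 \<in> EF" "f e1 = f e2"
    with f have "\<phi> ` e1 = \<phi> ` e2" by metis
    moreover have "e1 \<subseteq> VF" "e2 \<subseteq> VF"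
      using assms(1) \<open>e1 \<in> EF\<close> \<open>e2 \<in> EF\<close> unfolding is_graph_def by blast+
    ultimately show "e1 = e2" using \<open>inj_on \<phi> VF\<close> by (simp add: inj_on_image_eq_iff)
  qed
  with f assms(2,3) show ?thesis
    unfolding contains_Tr_def by blast
qed

lemma witness_edge_hits_third_vertex:
  assumes F: "is_graph VF EF" and "Tr_free VF EF V H"
    and "inj_on g VF" and "g ` VF \<subseteq> V" and shadow: "(\<lambda>e. g ` e) ` EF \<subseteq> shadow_edges H"
  shows "\<exists>a\<in>VF. \<exists>b\<in>VF. \<exists>c\<in>VF. a \<noteq> c \<and> b \<noteq> c \<and> g c \<in> witness_edge H (g a) (g b)"
proof -
  from \<open>Tr_free VF EF V H\<close> contains_TrI[OF F \<open>inj_on g VF\<close> \<open>g ` VF \<subseteq> V\<close>]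
  obtain e where "e \<in> EF" and untraced: "\<forall>h\<in>H. h \<inter> g ` VF \<noteq> g ` e"
    unfolding Tr_free_def by meson
  from F \<open>e \<in> EF\<close> have "card e = 2" "e \<subseteq> VF" unfolding is_graph_def by auto
  then obtain a b where e: "e = {a, b}" and "a \<in> VF" "b \<in> VF" by (auto simp: card_2_iff)
  let ?h = "witness_edge H (g a) (g b)"
  have "{g a, g b} \<in> shadow_edges H" using shadow \<open>e \<in> EF\<close> e by auto
  then have "?h \<in> H" "g a \<in> ?h" "g b \<in> ?h" by (rule witness_edge_shadow)+
  with untraced have "?h \<inter> g ` VF \<noteq> {g a, g b}" unfolding e by auto
  moreover have "{g a, g b} \<subseteq> ?h \<inter> g ` VF"
    using \<open>g a \<in> ?h\<close> \<open>g b \<in> ?h\<close> \<open>a \<in> VF\<close> \<open>b \<in> VF\<close> by auto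
  ultimately obtain c where "c \<in> VF" "g c \<in> ?h" "g c \<noteq> g a" "g c \<noteq> g b"
    by blast
  with \<open>a \<in> VF\<close> \<open>b \<in> VF\<close> show ?thesis by (metis (no_types))
qed

definition collision_maps :: "'a set \<Rightarrow> 'b set \<Rightarrow> 'b set set \<Rightarrow> 'a \<times> 'a \<times> 'a \<Rightarrow> ('a \<Rightarrow> 'b) set"
  where "collision_maps VF V H =
    (\<lambda>(a, b, c). {g \<in> VF \<rightarrow>\<^sub>E V. g c \<in> witness_edge H (g a) (g b)})"

lemma copies_in_shadow_subset_collision_maps:
  assumes "is_graph VF EF" and "Tr_free VF EF V H"
  shows "copies VF EF V (shadow_edges H) \<subseteq> (\<lambda>g. (g ` VF, (\<lambda>e. g ` e) ` EF)) `
    (\<Union>t\<in>{(a, b, c). a \<in> VF \<and> b \<in> VF \<and> c \<in> VF \<and> a \<noteq> c \<and> b \<noteq> c}. collision_maps VF V H t)"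
proof
  fix x assume "x \<in> copies VF EF V (shadow_edges H)"
  with copies_subset_image_PiE[OF assms(1)] obtain g where x: "x = (g ` VF, (\<lambda>e. g ` e) ` EF)"
    and g: "g \<in> VF \<rightarrow>\<^sub>E V" "inj_on g VF" "(\<lambda>e. g ` e) ` EF \<subseteq> shadow_edges H"
    by blast
  from g(1) have "g ` VF \<subseteq> V" by auto
  from witness_edge_hits_third_vertex[OF assms g(2) this g(3)] obtain a b c
    where "a \<in> VF" "b \<in> VF" "c \<in> VF" "a \<noteq> c" "b \<noteq> c" "g c \<in> witness_edge H (g a) (g b)"
    by blast
  with g(1) have "g \<in> (\<Union>t\<in>{(a, b, c). a \<in> VF \<and> b \<in> VF \<and> c \<in> VF \<and> a \<noteq> c \<and> b \<noteq> c}.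
      collision_maps VF V H t)"
    unfolding collision_maps_def by blast
  with x show "x \<in> (\<lambda>g. (g ` VF, (\<lambda>e. g ` e) ` EF)) ` \<dots>" by blast
qed

lemma card_collision_maps_le:
  assumes "finite VF" and "uniform_hypergraph r V H" and "c \<in> VF" and "a \<noteq> c" and "b \<noteq> c"
  shows "card (collision_maps VF V H (a, b, c)) \<le> r * card V ^ (card VF - 1)"
proof -
  have "finite V" using assms(2) unfolding uniform_hypergraph_def by blast
  from card_PiE_constrained_le[where S = "witness_edge H", OF assms(1) this assms(3-5)
      card_witness_edge_le[OF assms(2)]]
  show ?thesis unfolding collision_maps_def by simp
qed

lemma finite_collision_maps:
  assumes "finite VF" and "finite V"
  shows "finite (collision_maps VF V H t)"
  using assms unfolding collision_maps_def by (simp add: finite_PiE split: prod.split)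

theorem proposition4:
  fixes VF :: "'a set" and EF :: "'a set set" and r :: nat
  assumes "is_graph VF EF" and "r \<ge> 2"
  shows "\<exists>C::real. \<forall>(n::nat) (V::nat set) (H::nat set set).
           uniform_hypergraph r V H \<and> card V = n \<and> Tr_free VF EF V H \<longrightarrow>
           real (card (copies VF EF V (shadow_edges H))) \<le> C * real n ^ (card VF - 1)"
proof -
  define T where "T = {(a, b, c). a \<in> VF \<and> b \<in> VF \<and> c \<in> VF \<and> a \<noteq> c \<and> b \<noteq> c}"
  have "finite VF" using assms(1) unfolding is_graph_def by blast
  then have "finite T" unfolding T_def by (auto intro: finite_subset[of _ "VF \<times> VF \<times> VF"])
  show ?thesis
  proof (intro exI[of _ "real (card T * r)"] allI impI)
    fix n and V :: "nat set" and H
    assume "uniform_hypergraph r V H \<and> card V = n \<and> Tr_free VF EF V H"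
    then have H: "uniform_hypergraph r V H" and "card V = n" and "Tr_free VF EF V H" by auto
    then have "finite V" unfolding uniform_hypergraph_def by blast
    have "card (copies VF EF V (shadow_edges H)) \<le> card (\<Union>t\<in>T. collision_maps VF V H t)"
      using copies_in_shadow_subset_collision_maps[OF assms(1) \<open>Tr_free VF EF V H\<close>]
        finite_collision_maps[OF \<open>finite VF\<close> \<open>finite V\<close>] \<open>finite T\<close> unfolding T_def[symmetric]
      by (meson card_image_le card_mono finite_UN_I finite_imageI order_trans)
    also have "\<dots> \<le> (\<Sum>t\<in>T. card (collision_maps VF V H t))"
      by (rule card_UN_le[OF \<open>finite T\<close>])
    also have "\<dots> \<le> (\<Sum>t\<in>T. r * n ^ (card VF - 1))"
      using card_collision_maps_le[OF \<open>finite VF\<close> H] \<open>card V = n\<close>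
      unfolding T_def by (intro sum_mono) auto
    also have "\<dots> = card T * r * n ^ (card VF - 1)" by simp
    finally show "real (card (copies VF EF V (shadow_edges H)))
        \<le> real (card T * r) * real n ^ (card VF - 1)"
      by (metis of_nat_le_iff of_nat_mult of_nat_power)
  qed
qed

end
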